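(* Let $s\in\mathbb{C}$. If the integral converges, then \[ \psi(s)=\int_0^1\!\!\int_0^1\frac{(xy)^{s-1}-y}{(1-xy)\log(xy)}\,dx\,dy, \] where $\psi=\Gamma'/\Gamma$ is the digamma function. *)

theory Defs
  imports "HOL-Analysis.Analysis"
begin

end

theory Submission
  imports Defs "HOL-Real_Asymp.Real_Asymp"
begin

(* Put u = x y. Since (1 - u^N) / ((1 - u) ln u) = (\<Sum>n<N. u^n) / ln u, multiplying the integrand
   by 1 - (x y)^N splits it into two absolutely integrable pieces. The substitution u = x y turns
   the double integral of h(y) f(x y) over the unit square into the integral of w(u) f(u) over
   [0, 1], with weight w(u) = integral of h(y)/y over [u, 1]. With h = 1 (so w = -ln u) the first
   piece becomes -\<Sum>n<N 1/(s + n); with h = y (so w = 1 - u) the second becomes the Frullani-type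
   integral of (1 - u^N)/ln u, which is -ln (N + 1). Their difference ln (N + 1) - \<Sum>n<N 1/(s + n)
   tends to the digamma function, while the remaining part, (x y)^N times the integrand, vanishes in
   the limit by dominated convergence. Integrability forces Re s > 0: for N = 1 the first piece has
   the absolute integral of u^(Re s - 1) over [0, 1]. *)

section \<open>The substitution u = x y on the unit square\<close>

lemma nn_integral_unit_interval_scale:
  fixes g :: "real \<Rightarrow> ennreal"
  assumes [measurable]: "g \<in> borel_measurable borel" and "0 < y"
  shows "(\<integral>\<^sup>+x. indicator {0..1} x * g (x * y) \<partial>lborel)
       = ennreal (1 / y) * (\<integral>\<^sup>+u. indicator {0..y} u * g u \<partial>lborel)"
proof -
  have "(\<integral>\<^sup>+u. indicator {0..y} u * g u \<partial>lborel)
       = ennreal y * (\<integral>\<^sup>+x. indicator {0..y} (0 + y * x) * g (0 + y * x) \<partial>lborel)"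
    using \<open>0 < y\<close> nn_integral_real_affine[of "\<lambda>u. indicator {0..y} u * g u" y 0] by simp
  also have "(\<integral>\<^sup>+x. indicator {0..y} (0 + y * x) * g (0 + y * x) \<partial>lborel)
      = (\<integral>\<^sup>+x. indicator {0..1} x * g (x * y) \<partial>lborel)"
    using \<open>0 < y\<close> by (intro nn_integral_cong) (auto simp: indicator_def mult.commute zero_le_mult_iff)
  finally show ?thesis
    using \<open>0 < y\<close> by (simp add: mult.assoc[symmetric] flip: ennreal_mult)
qed

lemma nn_integral_unit_square_subst:
  fixes g :: "real \<Rightarrow> ennreal" and h w :: "real \<Rightarrow> real"
  assumes [measurable]: "g \<in> borel_measurable borel" "h \<in> borel_measurable borel"
    and weight: "\<And>u. 0 < u \<Longrightarrow> u \<le> 1 \<Longrightarrow>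
      (\<integral>\<^sup>+y. indicator {u..1} y * ennreal (h y / y) \<partial>lborel) = ennreal (w u)"
  shows "(\<integral>\<^sup>+p. indicator ({0..1} \<times> {0..1}) p * ennreal (h (snd p)) * g (fst p * snd p) \<partial>lborel)
       = (\<integral>\<^sup>+u. indicator {0..1} u * ennreal (w u) * g u \<partial>lborel)"
proof -
  \<comment> \<open>the integrand after substituting u = x y in the inner integral\<close>
  define K where "K u y = ennreal (of_bool (0 < y \<and> y \<le> 1 \<and> 0 \<le> u \<and> u \<le> y) * (h y / y)) * g u"
    for u y :: real
  have inner_x: "(\<integral>\<^sup>+x. indicator ({0..1} \<times> {0..1}) (x, y) * ennreal (h y) * g (x * y) \<partial>lborel)
      = (\<integral>\<^sup>+u. K u y \<partial>lborel)" if "y \<noteq> 0" for y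
  proof (cases "0 < y \<and> y \<le> 1")
    case True
    have "(\<integral>\<^sup>+x. indicator ({0..1} \<times> {0..1}) (x, y) * ennreal (h y) * g (x * y) \<partial>lborel)
        = ennreal (h y) * (\<integral>\<^sup>+x. indicator {0..1} x * g (x * y) \<partial>lborel)"
      using True by (subst nn_integral_cmult[symmetric]) (auto intro!: nn_integral_cong simp: indicator_def)
    also have "\<dots> = ennreal (h y / y) * (\<integral>\<^sup>+u. indicator {0..y} u * g u \<partial>lborel)"
      using True by (simp add: nn_integral_unit_interval_scale mult.assoc divide_inverse
          ennreal_mult'' flip: inverse_eq_divide)
    also have "\<dots> = (\<integral>\<^sup>+u. K u y \<partial>lborel)"
      using True by (subst nn_integral_cmult[symmetric]) (auto intro!: nn_integral_cong simp: K_def indicator_def)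
    finally show ?thesis .
  qed (use that in \<open>auto simp: K_def indicator_def\<close>)
  have inner_y: "(\<integral>\<^sup>+y. K u y \<partial>lborel) = indicator {0..1} u * ennreal (w u) * g u"
    if "u \<noteq> 0" for u
  proof (cases "0 < u \<and> u \<le> 1")
    case True
    have "(\<integral>\<^sup>+y. K u y \<partial>lborel) = (\<integral>\<^sup>+y. indicator {u..1} y * ennreal (h y / y) * g u \<partial>lborel)"
      using True by (intro nn_integral_cong) (auto simp: K_def indicator_def)
    also have "\<dots> = ennreal (w u) * g u"
      using True by (subst nn_integral_multc) (auto simp: weight)
    finally show ?thesis using True by simp
  next
    case False
    with that have "K u y = 0" for y by (auto simp: K_def)
    with False that show ?thesis by (auto simp: indicator_def)
  qed
  have "(\<integral>\<^sup>+p. indicator ({0..1} \<times> {0..1}) p * ennreal (h (snd p)) * g (fst p * snd p) \<partial>lborel)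
      = (\<integral>\<^sup>+y. \<integral>\<^sup>+x. indicator ({0..1} \<times> {0..1}) (x, y) * ennreal (h y) * g (x * y) \<partial>lborel \<partial>lborel)"
    by (simp add: lborel_prod[symmetric]) (subst lborel_pair.nn_integral_snd[symmetric]; simp)
  also have "\<dots> = (\<integral>\<^sup>+y. \<integral>\<^sup>+u. K u y \<partial>lborel \<partial>lborel)"
    using AE_lborel_singleton[of 0] by (intro nn_integral_cong_AE) (auto elim!: eventually_mono simp: inner_x)
  also have "\<dots> = (\<integral>\<^sup>+u. \<integral>\<^sup>+y. K u y \<partial>lborel \<partial>lborel)"
    unfolding K_def by (rule lborel_pair.Fubini') measurable
  also have "\<dots> = (\<integral>\<^sup>+u. indicator {0..1} u * ennreal (w u) * g u \<partial>lborel)"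
    using AE_lborel_singleton[of 0] by (intro nn_integral_cong_AE) (auto elim!: eventually_mono simp: inner_y)
  finally show ?thesis .
qed

lemma has_bochner_integral_unit_square_subst_nonneg:
  fixes q h w :: "real \<Rightarrow> real"
  assumes [measurable]: "q \<in> borel_measurable borel" "h \<in> borel_measurable borel" "w \<in> borel_measurable borel"
    and q_nonneg: "\<And>u. 0 \<le> q u"
    and h_nonneg: "\<And>y. 0 \<le> y \<Longrightarrow> y \<le> 1 \<Longrightarrow> 0 \<le> h y"
    and w_nonneg: "\<And>u. 0 \<le> u \<Longrightarrow> u \<le> 1 \<Longrightarrow> 0 \<le> w u"
    and weight: "\<And>u. 0 < u \<Longrightarrow> u \<le> 1 \<Longrightarrow>
      (\<integral>\<^sup>+y. indicator {u..1} y * ennreal (h y / y) \<partial>lborel) = ennreal (w u)"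
    and I: "has_bochner_integral lborel (\<lambda>u. indicator {0..1} u * (w u * q u)) I"
  shows "has_bochner_integral lborel
           (\<lambda>p. indicator ({0..1} \<times> {0..1}) p * (h (snd p) * q (fst p * snd p))) I"
proof (rule has_bochner_integral_nn_integral)
  let ?F = "\<lambda>u. indicator {0..1} u * (w u * q u)"
  have F_nonneg: "0 \<le> ?F u" for u
    using w_nonneg q_nonneg by (auto simp: indicator_def)
  have int: "integrable lborel ?F" and I_eq: "integral\<^sup>L lborel ?F = I"
    using I by (auto simp: has_bochner_integral_iff)
  show "0 \<le> I"
    using I_eq integral_nonneg_AE[of ?F] F_nonneg by auto
  have "(\<integral>\<^sup>+p. ennreal (indicator ({0..1} \<times> {0..1}) p * (h (snd p) * q (fst p * snd p))) \<partial>lborel)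
      = (\<integral>\<^sup>+p. indicator ({0..1} \<times> {0..1}) p * ennreal (h (snd p)) * ennreal (q (fst p * snd p))
          \<partial>lborel)"
    using h_nonneg q_nonneg by (intro nn_integral_cong) (auto simp: indicator_def ennreal_mult)
  also have "\<dots> = (\<integral>\<^sup>+u. indicator {0..1} u * ennreal (w u) * ennreal (q u) \<partial>lborel)"
    by (rule nn_integral_unit_square_subst) (simp_all add: weight)
  also have "\<dots> = (\<integral>\<^sup>+u. ennreal (?F u) \<partial>lborel)"
    using w_nonneg q_nonneg by (intro nn_integral_cong) (auto simp: indicator_def ennreal_mult)
  also have "\<dots> = ennreal I"
    using nn_integral_eq_integral[OF int] F_nonneg I_eq by simp
  finally show "(\<integral>\<^sup>+p. ennreal (indicator ({0..1} \<times> {0..1}) p * (h (snd p) * q (fst p * snd p))) \<partial>lborel)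
      = ennreal I" .
  show "(\<lambda>p::real \<times> real. indicator ({0..1} \<times> {0..1}) p * (h (snd p) * q (fst p * snd p)))
      \<in> borel_measurable lborel"
    unfolding measurable_lborel2 borel_prod[symmetric] by measurable
  show "AE p in lborel. 0 \<le> indicator ({0..1} \<times> {0..1}) p * (h (snd p) * q (fst p * snd p))"
    using h_nonneg q_nonneg by (auto simp: indicator_def)
qed

lemma has_bochner_integral_unit_square_subst_real:
  fixes q h w :: "real \<Rightarrow> real"
  assumes [measurable]: "q \<in> borel_measurable borel" "h \<in> borel_measurable borel" "w \<in> borel_measurable borel"
    and h_nonneg: "\<And>y. 0 \<le> y \<Longrightarrow> y \<le> 1 \<Longrightarrow> 0 \<le> h y"
    and w_nonneg: "\<And>u. 0 \<le> u \<Longrightarrow> u \<le> 1 \<Longrightarrow> 0 \<le> w u"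
    and weight: "\<And>u. 0 < u \<Longrightarrow> u \<le> 1 \<Longrightarrow>
      (\<integral>\<^sup>+y. indicator {u..1} y * ennreal (h y / y) \<partial>lborel) = ennreal (w u)"
    and I: "has_bochner_integral lborel (\<lambda>u. indicator {0..1} u * (w u * q u)) I"
  shows "has_bochner_integral lborel
           (\<lambda>p. indicator ({0..1} \<times> {0..1}) p * (h (snd p) * q (fst p * snd p))) I"
proof -
  let ?F = "\<lambda>u. indicator {0..1} u * (w u * q u)"
  let ?P = "\<lambda>q u. indicator {0..1} u * (w u * max (q u) 0)"
  have int: "integrable lborel ?F" and I_eq: "integral\<^sup>L lborel ?F = I"
    using I by (auto simp: has_bochner_integral_iff)
  have "?P q u = max (?F u) 0 \<and> ?P (\<lambda>u. - q u) u = max (- ?F u) 0" for u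
    using w_nonneg[of u]
    by (cases "0 \<le> u \<and> u \<le> 1") (auto simp: indicator_def max_def mult_le_0_iff zero_le_mult_iff)
  then have parts: "?P q = (\<lambda>u. max (?F u) 0)" "?P (\<lambda>u. - q u) = (\<lambda>u. max (- ?F u) 0)"
    by auto
  have int_parts: "integrable lborel (?P q)" "integrable lborel (?P (\<lambda>u. - q u))"
    unfolding parts using int by (auto intro: integrable_max)
  have "has_bochner_integral lborel
      (\<lambda>p. indicator ({0..1} \<times> {0..1}) p * (h (snd p) * max (q (fst p * snd p)) 0)
         - indicator ({0..1} \<times> {0..1}) p * (h (snd p) * max (- q (fst p * snd p)) 0))
      (integral\<^sup>L lborel (?P q) - integral\<^sup>L lborel (?P (\<lambda>u. - q u)))"
    using int_parts
    by (intro has_bochner_integral_diff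
        has_bochner_integral_unit_square_subst_nonneg[OF _ _ _ _ h_nonneg w_nonneg weight])
       (auto simp: has_bochner_integral_iff)
  also have "integral\<^sup>L lborel (?P q) - integral\<^sup>L lborel (?P (\<lambda>u. - q u)) = I"
    unfolding I_eq[symmetric] Bochner_Integration.integral_diff[OF int_parts, symmetric]
    by (intro Bochner_Integration.integral_cong) (auto simp: max_def algebra_simps)
  finally show ?thesis
    by (rule has_bochner_integral_cong[OF refl _ refl, THEN iffD1, rotated]) (auto simp: max_def algebra_simps)
qed

lemma has_bochner_integral_unit_square_subst:
  fixes f :: "real \<Rightarrow> complex" and h w :: "real \<Rightarrow> real"
  assumes [measurable]: "f \<in> borel_measurable borel" "h \<in> borel_measurable borel" "w \<in> borel_measurable borel"
    and h_nonneg: "\<And>y. 0 \<le> y \<Longrightarrow> y \<le> 1 \<Longrightarrow> 0 \<le> h y"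
    and w_nonneg: "\<And>u. 0 \<le> u \<Longrightarrow> u \<le> 1 \<Longrightarrow> 0 \<le> w u"
    and weight: "\<And>u. 0 < u \<Longrightarrow> u \<le> 1 \<Longrightarrow>
      (\<integral>\<^sup>+y. indicator {u..1} y * ennreal (h y / y) \<partial>lborel) = ennreal (w u)"
    and I: "has_bochner_integral lborel (\<lambda>u. indicator {0..1} u *\<^sub>R (w u *\<^sub>R f u)) I"
  shows "has_bochner_integral lborel
           (\<lambda>p. indicator ({0..1} \<times> {0..1}) p *\<^sub>R (h (snd p) *\<^sub>R f (fst p * snd p))) I"
proof -
  have "has_bochner_integral lborel
      (\<lambda>p. indicator ({0..1} \<times> {0..1}) p * (h (snd p) * Re (f (fst p * snd p)))) (Re I)"
    using has_bochner_integral_Re[OF I]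
    by (intro has_bochner_integral_unit_square_subst_real[OF _ _ _ h_nonneg w_nonneg weight])
       (auto simp: mult.assoc)
  moreover have "has_bochner_integral lborel
      (\<lambda>p. indicator ({0..1} \<times> {0..1}) p * (h (snd p) * Im (f (fst p * snd p)))) (Im I)"
    using has_bochner_integral_Im[OF I]
    by (intro has_bochner_integral_unit_square_subst_real[OF _ _ _ h_nonneg w_nonneg weight])
       (auto simp: mult.assoc)
  ultimately have "has_bochner_integral lborel
      (\<lambda>p. of_real (indicator ({0..1} \<times> {0..1}) p * (h (snd p) * Re (f (fst p * snd p))))
         + \<i> * of_real (indicator ({0..1} \<times> {0..1}) p * (h (snd p) * Im (f (fst p * snd p)))))
      (of_real (Re I) + \<i> * of_real (Im I))"
    by (intro has_bochner_integral_add has_bochner_integral_mult_right has_bochner_integral_of_real)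
  moreover have "(\<lambda>p. of_real (indicator ({0..1} \<times> {0..1}) p * (h (snd p) * Re (f (fst p * snd p))))
         + \<i> * of_real (indicator ({0..1} \<times> {0..1}) p * (h (snd p) * Im (f (fst p * snd p)))))
      = (\<lambda>p. indicator ({0..1} \<times> {0..1}) p *\<^sub>R (h (snd p) *\<^sub>R f (fst p * snd p)))"
    by (auto simp: fun_eq_iff complex_eq_iff)
  moreover have "of_real (Re I) + \<i> * of_real (Im I) = I"
    by (simp add: complex_eq_iff)
  ultimately show ?thesis by (simp only:)
qed

lemma integrable_unit_square_substD:
  fixes f :: "real \<Rightarrow> 'b::{banach, second_countable_topology}" and h w :: "real \<Rightarrow> real"
  assumes [measurable]: "f \<in> borel_measurable borel" "h \<in> borel_measurable borel" "w \<in> borel_measurable borel"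
    and h_nonneg: "\<And>y. 0 \<le> y \<Longrightarrow> y \<le> 1 \<Longrightarrow> 0 \<le> h y"
    and w_nonneg: "\<And>u. 0 \<le> u \<Longrightarrow> u \<le> 1 \<Longrightarrow> 0 \<le> w u"
    and weight: "\<And>u. 0 < u \<Longrightarrow> u \<le> 1 \<Longrightarrow>
      (\<integral>\<^sup>+y. indicator {u..1} y * ennreal (h y / y) \<partial>lborel) = ennreal (w u)"
    and int: "integrable lborel (\<lambda>p. indicator ({0..1} \<times> {0..1}) p *\<^sub>R (h (snd p) *\<^sub>R f (fst p * snd p)))"
  shows "integrable lborel (\<lambda>u. indicator {0..1} u *\<^sub>R (w u *\<^sub>R f u))"
proof (subst integrable_iff_bounded, intro conjI)
  show "(\<lambda>u. indicator {0..1} u *\<^sub>R (w u *\<^sub>R f u)) \<in> borel_measurable lborel"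
    by measurable
  have "(\<integral>\<^sup>+u. ennreal (norm (indicator {0..1} u *\<^sub>R (w u *\<^sub>R f u))) \<partial>lborel)
      = (\<integral>\<^sup>+u. indicator {0..1} u * ennreal (w u) * ennreal (norm (f u)) \<partial>lborel)"
    using w_nonneg by (intro nn_integral_cong) (auto simp: indicator_def ennreal_mult)
  also have "\<dots> = (\<integral>\<^sup>+p. indicator ({0..1} \<times> {0..1}) p * ennreal (h (snd p))
      * ennreal (norm (f (fst p * snd p))) \<partial>lborel)"
    by (rule nn_integral_unit_square_subst[symmetric]) (simp_all add: weight)
  also have "\<dots> = (\<integral>\<^sup>+p. ennreal (norm (indicator ({0..1} \<times> {0..1}) p *\<^sub>R
      (h (snd p) *\<^sub>R f (fst p * snd p)))) \<partial>lborel)"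
    using h_nonneg by (intro nn_integral_cong) (auto simp: indicator_def ennreal_mult)
  also have "\<dots> < \<infinity>"
    using int by (simp add: integrable_iff_bounded)
  finally show "(\<integral>\<^sup>+u. ennreal (norm (indicator {0..1} u *\<^sub>R (w u *\<^sub>R f u))) \<partial>lborel) < \<infinity>" .
qed

lemma borel_measurable_of_real_powr [measurable]:
  "(\<lambda>x::real. complex_of_real x powr a) \<in> borel_measurable borel"
proof -
  have "complex_of_real x powr a = (if x = 0 then 0
          else exp (a * (of_real (ln \<bar>x\<bar>) + (if x < 0 then pi else 0) * \<i>)))" for x
    by (simp add: powr_def Ln_of_real')
  then show ?thesis by simp
qed

lemma ln_nonpos_unit_interval: "0 \<le> u \<Longrightarrow> u \<le> 1 \<Longrightarrow> ln (u::real) \<le> 0"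
  by (cases "u = 0") auto

lemma nn_integral_inverse_Icc:
  assumes "0 < u" "u \<le> 1"
  shows "(\<integral>\<^sup>+y. indicator {u..1} y * ennreal (1 / y) \<partial>lborel) = ennreal (- ln u)"
proof -
  have "(ln has_real_derivative 1 / y) (at y)" if "u \<le> y" for y
    using that assms by (auto intro!: derivative_eq_intros)
  then show ?thesis
    using assms nn_integral_FTC_Icc[of "\<lambda>y. 1 / y" u 1 ln] by (auto simp: mult.commute)
qed

lemma has_bochner_integral_of_real_powr_unit_interval:
  assumes "-1 < Re a"
  shows "has_bochner_integral lborel (\<lambda>u. indicator {0..1} u *\<^sub>R complex_of_real u powr a) (1 / (a + 1))"
proof -
  have "a + 1 \<noteq> 0"
    using assms by (auto simp: complex_eq_iff)
  then have "((\<lambda>u. complex_of_real u powr a) has_integral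
      (of_real 1 powr (a + 1) / (a + 1) - of_real 0 powr (a + 1) / (a + 1))) {0..1}"
    using assms by (intro fundamental_theorem_of_calculus_interior)
      (auto intro!: continuous_intros derivative_eq_intros has_vector_derivative_real_field)
  then have FTC: "((\<lambda>u. complex_of_real u powr a) has_integral 1 / (a + 1)) {0..1}"
    by simp
  have "(\<lambda>u. complex_of_real u powr a) absolutely_integrable_on {0..1}"
    using FTC integrable_on_powr_from_0[of "Re a" 1] assms
    by (intro absolutely_integrable_integrable_bound[where g = "\<lambda>u. u powr Re a"])
       (auto simp: norm_powr_real_powr)
  then have int: "set_integrable lborel {0..1} (\<lambda>u. complex_of_real u powr a)"
    unfolding absolutely_integrable_on_def set_integrable_def
    by (subst (asm) integrable_completion) measurable
  with FTC show ?thesis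
    using set_borel_integral_eq_integral(2)[OF int]
    by (simp add: has_bochner_integral_iff set_integrable_def set_lebesgue_integral_def integral_unique)
qed

lemma nn_integral_powr_exponent_Icc:
  fixes u a :: real
  assumes "0 < u" "u < 1" "0 \<le> a"
  shows "(\<integral>\<^sup>+t. ennreal (u powr t) * indicator {0..a} t \<partial>lborel) = ennreal ((1 - u powr a) / - ln u)"
proof -
  have "(\<integral>\<^sup>+t. ennreal (u powr t) * indicator {0..a} t \<partial>lborel) = ennreal (u powr a / ln u - u powr 0 / ln u)"
    using assms by (intro nn_integral_FTC_Icc) (auto intro!: derivative_eq_intros)
  also have "u powr a / ln u - u powr 0 / ln u = (1 - u powr a) / - ln u"
    using assms by (simp add: field_simps)
  finally show ?thesis .
qed

lemma nn_integral_powr_unit_interval: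
  fixes t :: real
  assumes "0 \<le> t"
  shows "(\<integral>\<^sup>+u. ennreal (u powr t) * indicator {0..1} u \<partial>lborel) = ennreal (1 / (t + 1))"
proof -
  have "((\<lambda>u. if u \<in> {0..1} then u powr t else 0) has_integral 1 / (t + 1)) UNIV"
    unfolding has_integral_restrict_UNIV using has_integral_powr_from_0[of t 1] assms by simp
  also have "(\<lambda>u. if u \<in> {0..1} then u powr t else 0) = (\<lambda>u. u powr t * indicator {0..1} u)"
    by (auto simp: fun_eq_iff)
  finally have "((\<lambda>u. u powr t * indicator {0..1} u) has_integral 1 / (t + 1)) UNIV" .
  from nn_integral_has_integral_lborel[OF _ _ this]
  have "(\<integral>\<^sup>+u. ennreal (u powr t * indicator {0..1} u) \<partial>lborel) = ennreal (1 / (t + 1))"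
    by auto
  then show ?thesis
    by (simp add: ennreal_mult'' ennreal_indicator)
qed

lemma has_bochner_integral_one_minus_powr_div_ln:
  fixes a :: real
  assumes "0 \<le> a"
  shows "has_bochner_integral lborel (\<lambda>u. indicator {0..1} u * ((1 - u powr a) / ln u)) (- ln (a + 1))"
proof -
  let ?f = "\<lambda>u::real. indicator {0..1} u * ((1 - u powr a) / - ln u)"
  have f_nonneg: "0 \<le> ?f u" for u
  proof (cases "0 < u \<and> u < 1")
    case True
    then show ?thesis
      using assms by (auto simp: indicator_def intro!: divide_nonneg_neg powr_le1)
  qed (auto simp: indicator_def)
  \<comment> \<open>Tonelli, after writing the integrand as an integral over the exponent\<close>
  have "(\<integral>\<^sup>+u. ennreal (?f u) \<partial>lborel)
      = (\<integral>\<^sup>+u. \<integral>\<^sup>+t. ennreal (u powr t) * indicator {0..a} t * indicator {0..1} u \<partial>lborel \<partial>lborel)"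
  proof (intro nn_integral_cong_AE)
    show "AE u in lborel. ennreal (?f u)
        = (\<integral>\<^sup>+t. ennreal (u powr t) * indicator {0..a} t * indicator {0..1} u \<partial>lborel)"
      using AE_lborel_singleton[of 0] AE_lborel_singleton[of 1]
    proof eventually_elim
      case (elim u)
      then show ?case
        using nn_integral_powr_exponent_Icc[of u a] assms
        by (cases "0 < u \<and> u < 1") (auto simp: indicator_def nn_integral_multc)
    qed
  qed
  also have "\<dots> = (\<integral>\<^sup>+t. \<integral>\<^sup>+u. ennreal (u powr t) * indicator {0..1} u * indicator {0..a} t \<partial>lborel \<partial>lborel)"
    by (subst lborel_pair.Fubini') (auto intro!: nn_integral_cong simp: mult_ac)
  also have "\<dots> = (\<integral>\<^sup>+t. ennreal (1 / (t + 1)) * indicator {0..a} t \<partial>lborel)"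
    by (intro nn_integral_cong) (auto simp: nn_integral_multc nn_integral_powr_unit_interval split: split_indicator)
  also have "\<dots> = ennreal (ln (a + 1) - ln (0 + 1))"
    using assms by (intro nn_integral_FTC_Icc) (auto intro!: derivative_eq_intros)
  finally have "has_bochner_integral lborel ?f (ln (a + 1))"
    using f_nonneg assms by (intro has_bochner_integral_nn_integral) auto
  from has_bochner_integral_minus[OF this] show ?thesis
    by (simp add: divide_simps)
qed

lemma nn_integral_powr_unit_interval_eq_infinity:
  fixes a :: real
  assumes "a \<le> -1"
  shows "(\<integral>\<^sup>+u. ennreal (u powr a) * indicator {0..1} u \<partial>lborel) = \<infinity>"
proof (rule ccontr)
  assume "(\<integral>\<^sup>+u. ennreal (u powr a) * indicator {0..1} u \<partial>lborel) \<noteq> \<infinity>"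
  then obtain r where r: "0 \<le> r" "(\<integral>\<^sup>+u. ennreal (u powr a) * indicator {0..1} u \<partial>lborel) = ennreal r"
    using less_top_ennreal[of "\<integral>\<^sup>+u. ennreal (u powr a) * indicator {0..1} u \<partial>lborel"]
    by (auto simp: top.not_eq_extremum)
  define e where "e = exp (- (r + 1))"
  have e: "0 < e" "e \<le> 1"
    using r(1) by (auto simp: e_def)
  have "ennreal (r + 1) = (\<integral>\<^sup>+u. indicator {e..1} u * ennreal (1 / u) \<partial>lborel)"
    using nn_integral_inverse_Icc[OF e] by (simp add: e_def add.commute)
  also have "\<dots> \<le> (\<integral>\<^sup>+u. ennreal (u powr a) * indicator {0..1} u \<partial>lborel)"
  proof (intro nn_integral_mono)
    fix u :: real
    show "indicator {e..1} u * ennreal (1 / u) \<le> ennreal (u powr a) * indicator {0..1} u"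
    proof (cases "e \<le> u \<and> u \<le> 1")
      case True
      then have "1 / u = u powr -1"
        using e by (simp add: powr_minus_divide)
      also have "\<dots> \<le> u powr a"
        using True e assms by (intro powr_mono') auto
      finally have "1 / u \<le> u powr a" .
      with True e show ?thesis
        by (auto simp: indicator_def intro: ennreal_leI)
    qed (auto simp: indicator_def)
  qed
  finally show False
    using r by (simp add: ennreal_le_iff)
qed

lemma integrable_powr_unit_interval_imp_gt:
  fixes a :: real
  assumes "integrable lborel (\<lambda>u. indicator {0..1} u * u powr a)"
  shows "-1 < a"
proof (rule ccontr)
  assume "\<not> -1 < a"
  then have "(\<integral>\<^sup>+u. ennreal (norm (indicator {0..1} u * u powr a)) \<partial>lborel) = \<infinity>"
    using nn_integral_powr_unit_interval_eq_infinity[of a]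
    by (simp add: ennreal_mult'' ennreal_indicator mult.commute)
  with assms show False
    by (simp add: integrable_iff_bounded)
qed

section \<open>Dominated convergence and the digamma limit\<close>

lemma integral_power_scaleR_tendsto_zero:
  fixes F :: "'a \<Rightarrow> 'b::{banach, second_countable_topology}" and r :: "'a \<Rightarrow> real"
  assumes "integrable M F" "r \<in> borel_measurable M" "\<And>x. F x \<noteq> 0 \<Longrightarrow> \<bar>r x\<bar> < 1"
  shows "(\<lambda>N. \<integral>x. r x ^ N *\<^sub>R F x \<partial>M) \<longlonglongrightarrow> 0"
proof -
  have "(\<lambda>N. \<integral>x. r x ^ N *\<^sub>R F x \<partial>M) \<longlonglongrightarrow> (\<integral>x. 0 \<partial>M)"
  proof (rule integral_dominated_convergence)
    show "AE x in M. (\<lambda>N. r x ^ N *\<^sub>R F x) \<longlonglongrightarrow> 0"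
    proof (intro AE_I2)
      fix x
      show "(\<lambda>N. r x ^ N *\<^sub>R F x) \<longlonglongrightarrow> 0"
      proof (cases "F x = 0")
        case False
        then have "(\<lambda>N. r x ^ N) \<longlonglongrightarrow> 0"
          using assms(3) by (intro LIMSEQ_abs_realpow_zero2)
        then show ?thesis
          using tendsto_scaleR[OF _ tendsto_const] by fastforce
      qed simp
    qed
    show "AE x in M. norm (r x ^ N *\<^sub>R F x) \<le> norm (F x)" for N
    proof (intro AE_I2)
      fix x
      show "norm (r x ^ N *\<^sub>R F x) \<le> norm (F x)"
      proof (cases "F x = 0")
        case False
        then have "\<bar>r x\<bar> ^ N \<le> 1"
          using assms(3) by (intro power_le_one) (auto simp: less_imp_le)
        then show ?thesis
          by (simp add: power_abs mult_left_le_one_le)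
      qed simp
    qed
  qed (use assms in auto)
  then show ?thesis by simp
qed

lemma Digamma_LIMSEQ_ln_Suc:
  fixes z :: "'a :: {banach, real_normed_field}"
  assumes "z \<noteq> 0"
  shows "(\<lambda>m. of_real (ln (real m + 1)) - (\<Sum>n<m. 1 / (z + of_nat n))) \<longlonglongrightarrow> Digamma z"
proof -
  have "(\<lambda>m. ln (real m + 1) - ln (real m)) \<longlonglongrightarrow> 0"
    by real_asymp
  then have "(\<lambda>m. of_real (ln (real m)) - (\<Sum>n<m. inverse (z + of_nat n))
      + of_real (ln (real m + 1) - ln (real m))) \<longlonglongrightarrow> Digamma z + of_real 0"
    by (intro tendsto_add Digamma_LIMSEQ assms tendsto_of_real)
  then show ?thesis
    by (simp add: inverse_eq_divide algebra_simps)
qed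

section \<open>Truncations of the integrand\<close>

definition digamma_integrand :: "complex \<Rightarrow> real \<times> real \<Rightarrow> complex" where
  "digamma_integrand s = (\<lambda>(x, y). (complex_of_real (x * y) powr (s - 1) - complex_of_real y)
      / complex_of_real ((1 - x * y) * ln (x * y)))"

definition geom_log_kernel :: "nat \<Rightarrow> real \<Rightarrow> real" where
  "geom_log_kernel N u = (1 - u ^ N) / ((1 - u) * ln u)"

lemma borel_measurable_geom_log_kernel [measurable]: "geom_log_kernel N \<in> borel_measurable borel"
  unfolding geom_log_kernel_def by measurable

lemma digamma_integrand_truncate:
  "(1 - (x * y) ^ N) *\<^sub>R digamma_integrand s (x, y)
     = geom_log_kernel N (x * y) *\<^sub>R complex_of_real (x * y) powr (s - 1)
       - complex_of_real (y * geom_log_kernel N (x * y))"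
proof -
  \<comment> \<open>valid even for D = 0, as division by zero yields zero on both sides\<close>
  have field_identity: "c * (P - Y) / D = c / D * P - Y * (c / D)" for c P Y D :: complex
    by (simp add: diff_divide_distrib algebra_simps)
  show ?thesis
    using field_identity[of "of_real (1 - (x * y) ^ N)" "of_real (x * y) powr (s - 1)" "of_real y"
        "of_real ((1 - x * y) * ln (x * y))"]
    by (simp add: digamma_integrand_def geom_log_kernel_def scaleR_conv_of_real)
qed

lemma sum_of_real_powr_eq_geom_log_kernel:
  assumes "0 < u" "u < 1"
  shows "(\<Sum>n<N. complex_of_real u powr (s - 1 + of_nat n))
       = ln u *\<^sub>R (geom_log_kernel N u *\<^sub>R complex_of_real u powr (s - 1))"
proof -
  have "(\<Sum>n<N. complex_of_real u powr (s - 1 + of_nat n))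
      = complex_of_real u powr (s - 1) * (\<Sum>n<N. complex_of_real u ^ n)"
    using assms by (simp add: powr_add powr_nat' sum_distrib_left)
  also have "(\<Sum>n<N. complex_of_real u ^ n) = complex_of_real ((1 - u ^ N) / (1 - u))"
    using assms by (simp add: sum_gp_strict)
  also have "(1 - u ^ N) / (1 - u) = ln u * geom_log_kernel N u"
    using assms by (simp add: geom_log_kernel_def)
  finally show ?thesis
    by (simp add: scaleR_conv_of_real)
qed

lemma has_bochner_integral_geom_log_kernel_powr:
  assumes "0 < Re s"
  shows "has_bochner_integral lborel
           (\<lambda>p. indicator ({0..1} \<times> {0..1}) p *\<^sub>R
              (geom_log_kernel N (fst p * snd p) *\<^sub>R complex_of_real (fst p * snd p) powr (s - 1)))
           (- (\<Sum>n<N. 1 / (s + of_nat n)))"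
proof -
  have "has_bochner_integral lborel
      (\<lambda>u. - (\<Sum>n<N. indicator {0..1} u *\<^sub>R complex_of_real u powr (s - 1 + of_nat n)))
      (- (\<Sum>n<N. 1 / (s - 1 + of_nat n + 1)))"
    using assms
    by (intro has_bochner_integral_minus has_bochner_integral_sum has_bochner_integral_of_real_powr_unit_interval)
       auto
  moreover have "AE u in lborel.
      - (\<Sum>n<N. indicator {0..1} u *\<^sub>R complex_of_real u powr (s - 1 + of_nat n))
      = indicator {0..1} u *\<^sub>R ((- ln u) *\<^sub>R (geom_log_kernel N u *\<^sub>R complex_of_real u powr (s - 1)))"
    using AE_lborel_singleton[of 1]
  proof eventually_elim
    case (elim u)
    then show ?case
      using sum_of_real_powr_eq_geom_log_kernel[where u = u and N = N and s = s]
      by (cases "0 < u \<and> u < 1") (auto simp: indicator_def sum_negf)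
  qed
  ultimately have int: "has_bochner_integral lborel
      (\<lambda>u. indicator {0..1} u *\<^sub>R ((- ln u) *\<^sub>R (geom_log_kernel N u *\<^sub>R complex_of_real u powr (s - 1))))
      (- (\<Sum>n<N. 1 / (s + of_nat n)))"
    by (subst (asm) has_bochner_integral_cong_AE) (auto simp: algebra_simps)
  have "has_bochner_integral lborel
      (\<lambda>p. indicator ({0..1} \<times> {0..1}) p *\<^sub>R ((\<lambda>_. 1) (snd p) *\<^sub>R
          (geom_log_kernel N (fst p * snd p) *\<^sub>R complex_of_real (fst p * snd p) powr (s - 1))))
      (- (\<Sum>n<N. 1 / (s + of_nat n)))"
    by (rule has_bochner_integral_unit_square_subst[where w = "\<lambda>u. - ln u", OF _ _ _ _ _ _ int])
       (auto simp: nn_integral_inverse_Icc ln_nonpos_unit_interval)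
  then show ?thesis
    by simp
qed

lemma has_bochner_integral_geom_log_kernel:
  "has_bochner_integral lborel
     (\<lambda>p. indicator ({0..1} \<times> {0..1}) p * (snd p * geom_log_kernel N (fst p * snd p)))
     (- ln (real N + 1))"
proof (rule has_bochner_integral_unit_square_subst_real[where w = "\<lambda>u. 1 - u"])
  show "(\<integral>\<^sup>+y. indicator {u..1} y * ennreal (y / y) \<partial>lborel) = ennreal (1 - u)"
    if "0 < u" "u \<le> 1" for u :: real
  proof -
    have "(\<integral>\<^sup>+y. indicator {u..1} y * ennreal (y / y) \<partial>lborel)
        = (\<integral>\<^sup>+y. ennreal 1 * indicator {u..1} y \<partial>lborel)"
      using that by (intro nn_integral_cong) (auto simp: indicator_def)
    also have "\<dots> = ennreal (1 - u)"
      using that nn_integral_FTC_Icc[of "\<lambda>_. 1" u 1 "\<lambda>y. y"] by auto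
    finally show ?thesis .
  qed
  have "(1 - u) * geom_log_kernel N u = (1 - u powr real N) / ln u" if "0 \<le> u" for u :: real
    using that by (cases "u = 0") (auto simp: geom_log_kernel_def powr_realpow)
  then show "has_bochner_integral lborel (\<lambda>u. indicator {0..1} u * ((1 - u) * geom_log_kernel N u))
      (- ln (real N + 1))"
    using has_bochner_integral_one_minus_powr_div_ln[of "real N"]
    by (subst has_bochner_integral_cong[OF refl _ refl]) (auto simp: indicator_def)
qed auto

lemma has_bochner_integral_digamma_integrand_truncate:
  assumes "0 < Re s"
  shows "has_bochner_integral lborel
           (\<lambda>p. (1 - (fst p * snd p) ^ N) *\<^sub>R (indicator ({0..1} \<times> {0..1}) p *\<^sub>R digamma_integrand s p))
           (of_real (ln (real N + 1)) - (\<Sum>n<N. 1 / (s + of_nat n)))"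
proof -
  have "has_bochner_integral lborel
      (\<lambda>p. indicator ({0..1} \<times> {0..1}) p *\<^sub>R
          (geom_log_kernel N (fst p * snd p) *\<^sub>R complex_of_real (fst p * snd p) powr (s - 1))
        - of_real (indicator ({0..1} \<times> {0..1}) p * (snd p * geom_log_kernel N (fst p * snd p))))
      (- (\<Sum>n<N. 1 / (s + of_nat n)) - of_real (- ln (real N + 1)))"
    using assms
    by (intro has_bochner_integral_diff has_bochner_integral_of_real
        has_bochner_integral_geom_log_kernel_powr has_bochner_integral_geom_log_kernel)
  then show ?thesis
    by (subst has_bochner_integral_cong[OF refl _ refl])
       (auto simp: digamma_integrand_truncate indicator_def split: prod.splits)
qed

lemma integrable_geom_log_kernel_powr_if_integrable_digamma_integrand:
  assumes int: "integrable lborel (\<lambda>p. indicator ({0..1} \<times> {0..1}) p *\<^sub>R digamma_integrand s p)"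
  shows "integrable lborel (\<lambda>p. indicator ({0..1} \<times> {0..1}) p *\<^sub>R
           (geom_log_kernel N (fst p * snd p) *\<^sub>R complex_of_real (fst p * snd p) powr (s - 1)))"
proof -
  let ?Q = "{0..1} \<times> {0..1} :: (real \<times> real) set"
  let ?F = "\<lambda>p. indicator ?Q p *\<^sub>R digamma_integrand s p"
  have "integrable lborel (\<lambda>p. (1 - (fst p * snd p) ^ N) *\<^sub>R ?F p)"
  proof (rule Bochner_Integration.integrable_bound[OF int])
    have "(\<lambda>p::real \<times> real. 1 - (fst p * snd p) ^ N) \<in> borel_measurable lborel"
      by (simp add: measurable_lborel2 borel_measurable_continuous_onI continuous_intros)
    from this borel_measurable_integrable[OF int]
    show "(\<lambda>p. (1 - (fst p * snd p) ^ N) *\<^sub>R ?F p) \<in> borel_measurable lborel"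
      by (rule borel_measurable_scaleR)
    have "\<bar>1 - (fst p * snd p) ^ N\<bar> \<le> 1" if "p \<in> ?Q" for p :: "real \<times> real"
      using that by (auto simp: mult_le_one power_le_one)
    then show "AE p in lborel. norm ((1 - (fst p * snd p) ^ N) *\<^sub>R ?F p) \<le> norm (?F p)"
      by (intro AE_I2) (simp add: indicator_def mult_left_le_one_le)
  qed
  moreover have "integrable lborel
      (\<lambda>p. complex_of_real (indicator ?Q p * (snd p * geom_log_kernel N (fst p * snd p))))"
    using integrable.intros[OF has_bochner_integral_geom_log_kernel[of N]]
    by (rule integrable_of_real)
  ultimately have "integrable lborel (\<lambda>p. (1 - (fst p * snd p) ^ N) *\<^sub>R ?F p
      + complex_of_real (indicator ?Q p * (snd p * geom_log_kernel N (fst p * snd p))))"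
    by (rule Bochner_Integration.integrable_add)
  also have "(\<lambda>p. (1 - (fst p * snd p) ^ N) *\<^sub>R ?F p
        + complex_of_real (indicator ?Q p * (snd p * geom_log_kernel N (fst p * snd p))))
      = (\<lambda>p. indicator ?Q p *\<^sub>R
          (geom_log_kernel N (fst p * snd p) *\<^sub>R complex_of_real (fst p * snd p) powr (s - 1)))"
    using digamma_integrand_truncate[where N = N] by (auto simp: fun_eq_iff indicator_def eq_diff_eq)
  finally show ?thesis .
qed

lemma Re_pos_if_integrable_digamma_integrand:
  assumes "integrable lborel (\<lambda>p. indicator ({0..1} \<times> {0..1}) p *\<^sub>R digamma_integrand s p)"
  shows "0 < Re s"
proof -
  \<comment> \<open>For N = 1 the kernel is 1 / ln u, so after the substitution only u powr (s - 1) is left.\<close>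
  have "integrable lborel (\<lambda>p. indicator ({0..1} \<times> {0..1}) p *\<^sub>R ((\<lambda>_. 1) (snd p) *\<^sub>R
      (geom_log_kernel 1 (fst p * snd p) *\<^sub>R complex_of_real (fst p * snd p) powr (s - 1))))"
    using integrable_geom_log_kernel_powr_if_integrable_digamma_integrand[OF assms] by simp
  then have "integrable lborel (\<lambda>u. indicator {0..1} u *\<^sub>R
      ((- ln u) *\<^sub>R (geom_log_kernel 1 u *\<^sub>R complex_of_real u powr (s - 1))))"
    by (rule integrable_unit_square_substD[rotated -1])
       (auto simp: nn_integral_inverse_Icc ln_nonpos_unit_interval)
  then have norm_int: "integrable lborel (\<lambda>u. norm (indicator {0..1} u *\<^sub>R
      ((- ln u) *\<^sub>R (geom_log_kernel 1 u *\<^sub>R complex_of_real u powr (s - 1)))))"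
    by (rule integrable_norm)
  have norm_eq: "AE u in lborel. norm (indicator {0..1} u *\<^sub>R
      ((- ln u) *\<^sub>R (geom_log_kernel 1 u *\<^sub>R complex_of_real u powr (s - 1))))
      = indicator {0..1} u * u powr (Re s - 1)"
    using AE_lborel_singleton[of 1]
  proof eventually_elim
    case (elim u)
    then show ?case
      by (cases "0 < u \<and> u < 1")
         (auto simp: indicator_def geom_log_kernel_def norm_powr_real_powr abs_mult)
  qed
  have "integrable lborel (\<lambda>u. indicator {0..1} u * u powr (Re s - 1))"
    by (rule integrable_cong_AE_imp[OF norm_int _ norm_eq]) measurable
  then show ?thesis
    using integrable_powr_unit_interval_imp_gt by fastforce
qed

lemma digamma_partial_sums_tendsto_integral:
  assumes int: "integrable lborel (\<lambda>p. indicator ({0..1} \<times> {0..1}) p *\<^sub>R digamma_integrand s p)"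
  shows "(\<lambda>N. of_real (ln (real N + 1)) - (\<Sum>n<N. 1 / (s + of_nat n)))
           \<longlonglongrightarrow> (\<integral>p. indicator ({0..1} \<times> {0..1}) p *\<^sub>R digamma_integrand s p \<partial>lborel)"
proof -
  let ?F = "\<lambda>p. indicator ({0..1} \<times> {0..1}) p *\<^sub>R digamma_integrand s p"
  let ?a = "\<lambda>N. of_real (ln (real N + 1)) - (\<Sum>n<N. 1 / (s + of_nat n))"
  have "(\<integral>p. (fst p * snd p) ^ N *\<^sub>R ?F p \<partial>lborel) = (\<integral>p. ?F p \<partial>lborel) - ?a N" for N
  proof -
    have "has_bochner_integral lborel (\<lambda>p. (1 - (fst p * snd p) ^ N) *\<^sub>R ?F p) (?a N)"
      using Re_pos_if_integrable_digamma_integrand[OF int]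
      by (rule has_bochner_integral_digamma_integrand_truncate)
    moreover have "(\<integral>p. (fst p * snd p) ^ N *\<^sub>R ?F p \<partial>lborel)
        = (\<integral>p. ?F p - (1 - (fst p * snd p) ^ N) *\<^sub>R ?F p \<partial>lborel)"
      by (simp add: algebra_simps)
    ultimately show ?thesis
      using int by (simp add: has_bochner_integral_iff)
  qed
  moreover have "(\<lambda>N. \<integral>p. (fst p * snd p) ^ N *\<^sub>R ?F p \<partial>lborel) \<longlonglongrightarrow> 0"
  proof (rule integral_power_scaleR_tendsto_zero[OF int])
    show "\<bar>fst p * snd p\<bar> < 1" if "?F p \<noteq> 0" for p :: "real \<times> real"
      using that by (cases p) (auto simp: indicator_def digamma_integrand_def mult_le_one
          abs_mult less_le)
  qed (simp add: measurable_lborel2 borel_measurable_continuous_onI continuous_intros)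
  ultimately have "(\<lambda>N. (\<integral>p. ?F p \<partial>lborel) - ?a N) \<longlonglongrightarrow> 0"
    by simp
  then show ?thesis
    using tendsto_diff[OF tendsto_const[of "\<integral>p. ?F p \<partial>lborel"]] by fastforce
qed

theorem theorem3p7:
  fixes s :: complex
  assumes "set_integrable (lborel :: (real \<times> real) measure) ({0..1} \<times> {0..1})
             (\<lambda>(x, y). ((complex_of_real (x * y)) powr (s - 1) - complex_of_real y)
                        / complex_of_real ((1 - x * y) * ln (x * y)))"
  shows "Digamma s =
           (LINT p : {0..1} \<times> {0..1} | (lborel :: (real \<times> real) measure).
              (\<lambda>(x, y). ((complex_of_real (x * y)) powr (s - 1) - complex_of_real y)
                        / complex_of_real ((1 - x * y) * ln (x * y))) p)"
proof -
  have int: "integrable lborel (\<lambda>p. indicator ({0..1} \<times> {0..1}) p *\<^sub>R digamma_integrand s p)"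
    using assms by (simp add: set_integrable_def digamma_integrand_def)
  have "(\<lambda>N. of_real (ln (real N + 1)) - (\<Sum>n<N. 1 / (s + of_nat n))) \<longlonglongrightarrow> Digamma s"
    using Re_pos_if_integrable_digamma_integrand[OF int] by (intro Digamma_LIMSEQ_ln_Suc) auto
  with digamma_partial_sums_tendsto_integral[OF int]
  have "Digamma s = (\<integral>p. indicator ({0..1} \<times> {0..1}) p *\<^sub>R digamma_integrand s p \<partial>lborel)"
    by (rule LIMSEQ_unique[rotated])
  then show ?thesis
    by (simp add: set_lebesgue_integral_def digamma_integrand_def)
qed

end
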